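(* Fix $p\in[1,\infty]$ and write $\|\cdot\|$ for the $\ell_p$ norm on vectors and the induced $\ell_p\to\ell_p$ operator norm on matrices. Let $f:\mathbb{R}^{n_0}\to\mathbb{R}^{n_L}$ be the $L$-layer network defined by $a^{(0)}(x)=x$, $z^{(l)}(x)=W^{(l)}a^{(l-1)}(x)$ and $a^{(l)}(x)=\sigma^{(l)}(z^{(l)}(x))$ for $l=1,\dots,L-1$, and $f(x)=z^{(L)}(x)=W^{(L)}a^{(L-1)}(x)$, where $W^{(l)}\in\mathbb{R}^{n_l\times n_{l-1}}$ and $\sigma^{(l)}(z)=(\sigma^{(l)}_1(z_1),\dots,\sigma^{(l)}_{n_l}(z_{n_l}))$. Suppose each $\sigma^{(l)}_i$ is slope-restricted in $[\alpha^{(l)}_i,\beta^{(l)}_i]$ with $0\le\alpha^{(l)}_i\le\beta^{(l)}_i<\infty$. For $l=1,\dots,L-1$ let $d^{(l)}\in\mathbb{R}^{n_l}$ satisfy $0\le d^{(l)}_i\le\frac{\alpha^{(l)}_i+\beta^{(l)}_i}{2}$ for all $i$, and set $D^{(l)}=\mathrm{diag}(d^{(l)})$ and $D'^{(l)}=\mathrm{diag}(\beta^{(l)}-d^{(l)})$; set $D'^{(L)}=I$. Define $y^{(l)}(x)=D'^{(l)}z^{(l)}(x)$ for $l=1,\dots,L$. Define $m^{(1)}=\|D'^{(1)}W^{(1)}\|$ and, for $l=2,\dots,L$, $$m^{(l)}=\Big\|D'^{(l)}W^{(l)}\prod_{i=1}^{l-1}D^{(i)}W^{(i)}\Big\|+\sum_{j=1}^{l-1}\Big\|D'^{(l)}W^{(l)}\prod_{i=j+1}^{l-1}D^{(i)}W^{(i)}\Big\|\,m^{(j)},$$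 where $\prod_{i=a}^{b}D^{(i)}W^{(i)}=D^{(b)}W^{(b)}\cdots D^{(a)}W^{(a)}$ and the empty product is the identity. Then for each $l=1,\dots,L$, $m^{(l)}$ is a Lipschitz constant (in $\ell_p$) of the map $x\mapsto y^{(l)}(x)$. In particular, $m^{(L)}$ is a Lipschitz constant of $x\mapsto f(x)$.
   Context: A function $\sigma:\mathbb{R}\to\mathbb{R}$ is slope-restricted in $[\alpha,\beta]$ if $\alpha\le\frac{\sigma(x)-\sigma(y)}{x-y}\le\beta$ for all $x\ne y$. A Lipschitz constant $m$ of $g$ in $\ell_p$ means $\|g(x)-g(x')\|_p\le m\|x-x'\|_p$ for all $x,x'$. *)

theory Defs
  imports "HOL-Analysis.Analysis"
begin

text \<open>Vectors of length k are functions nat => real, only entries i < k matter.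
  Matrices of size r x c are functions nat => nat => real, entries (i,j) with i<r, j<c.\<close>

definition lpnorm :: "ereal \<Rightarrow> nat \<Rightarrow> (nat \<Rightarrow> real) \<Rightarrow> real" where
  "lpnorm p k x =
     (if p = \<infinity> then (if k = 0 then 0 else Max {\<bar>x i\<bar> | i. i < k})
      else (\<Sum>i<k. \<bar>x i\<bar> powr real_of_ereal p) powr (1 / real_of_ereal p))"

definition mv :: "nat \<Rightarrow> (nat \<Rightarrow> nat \<Rightarrow> real) \<Rightarrow> (nat \<Rightarrow> real) \<Rightarrow> (nat \<Rightarrow> real)" where
  "mv c A x = (\<lambda>i. \<Sum>j<c. A i j * x j)"

definition mm :: "nat \<Rightarrow> (nat \<Rightarrow> nat \<Rightarrow> real) \<Rightarrow> (nat \<Rightarrow> nat \<Rightarrow> real) \<Rightarrow> (nat \<Rightarrow> nat \<Rightarrow> real)" where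
  "mm k A B = (\<lambda>i j. \<Sum>t<k. A i t * B t j)"

definition idm :: "nat \<Rightarrow> nat \<Rightarrow> real" where
  "idm = (\<lambda>i j. if i = j then 1 else 0)"

definition opnorm :: "ereal \<Rightarrow> nat \<Rightarrow> nat \<Rightarrow> (nat \<Rightarrow> nat \<Rightarrow> real) \<Rightarrow> real" where
  "opnorm p r c A = Sup {lpnorm p r (mv c A x) | x. lpnorm p c x \<le> 1}"

definition slope_restricted :: "(real \<Rightarrow> real) \<Rightarrow> real \<Rightarrow> real \<Rightarrow> bool" where
  "slope_restricted s a b \<longleftrightarrow> (\<forall>x y. x \<noteq> y \<longrightarrow> a \<le> (s x - s y) / (x - y) \<and> (s x - s y) / (x - y) \<le> b)"

text \<open>Network: dims n, weights W l (an n l x n (l-1) matrix), activations sig l i.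
  act l x = a^(l)(x), preact l x = z^(l)(x) (for l >= 1).\<close>
fun act :: "(nat \<Rightarrow> nat) \<Rightarrow> (nat \<Rightarrow> nat \<Rightarrow> nat \<Rightarrow> real) \<Rightarrow> (nat \<Rightarrow> nat \<Rightarrow> real \<Rightarrow> real)
             \<Rightarrow> nat \<Rightarrow> (nat \<Rightarrow> real) \<Rightarrow> (nat \<Rightarrow> real)" where
  "act n W sig 0 x = x"
| "act n W sig (Suc l) x = (\<lambda>i. sig (Suc l) i (mv (n l) (W (Suc l)) (act n W sig l x) i))"

definition preact :: "(nat \<Rightarrow> nat) \<Rightarrow> (nat \<Rightarrow> nat \<Rightarrow> nat \<Rightarrow> real) \<Rightarrow> (nat \<Rightarrow> nat \<Rightarrow> real \<Rightarrow> real)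
             \<Rightarrow> nat \<Rightarrow> (nat \<Rightarrow> real) \<Rightarrow> (nat \<Rightarrow> real)" where
  "preact n W sig l x = mv (n (l - 1)) (W l) (act n W sig (l - 1) x)"

text \<open>prodDW n W d a b = D^(b) W^(b) ... D^(a) W^(a); identity if b < a.\<close>
fun prodDW :: "(nat \<Rightarrow> nat) \<Rightarrow> (nat \<Rightarrow> nat \<Rightarrow> nat \<Rightarrow> real) \<Rightarrow> (nat \<Rightarrow> nat \<Rightarrow> real)
               \<Rightarrow> nat \<Rightarrow> nat \<Rightarrow> (nat \<Rightarrow> nat \<Rightarrow> real)" where
  "prodDW n W d a 0 = (if a \<le> 0 then (\<lambda>r c. d 0 r * W 0 r c) else idm)"
| "prodDW n W d a (Suc b) =
     (if Suc b < a then idm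
      else if Suc b = a then (\<lambda>r c. d a r * W a r c)
      else mm (n b) (\<lambda>r c. d (Suc b) r * W (Suc b) r c) (prodDW n W d a b))"

end

(*
  For inputs x, x' let v_k be the difference of the activations a^(k)(x) - a^(k)(x').
  Then v_j = D^(j) W^(j) v_(j-1) + r_j, and since every difference quotient of sigma_i lies in
  [alpha_i, beta_i] while d_i <= (alpha_i + beta_i) / 2, each residual satisfies
  |r_j| <= (beta_j - d_j) |z^(j)(x) - z^(j)(x')| = |y^(j)(x) - y^(j)(x')| componentwise.
  Unrolling the recursion writes z^(l)(x) - z^(l)(x') as W^(l) (prod D W) (x - x') plus the sum
  over j of W^(l) (prod_(i>j) D W) r_j; the triangle inequality, the operator norm bound and
  strong induction on l give exactly the recursion defining m^(l).
*)
theory Submission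
  imports Defs
begin

section \<open>The \<open>\<ell>\<^sub>p\<close> norm\<close>

lemma one_le_ereal_cases:
  assumes "1 \<le> (p::ereal)"
  obtains "p = \<infinity>" | q where "p = ereal q" "1 \<le> q"
  using assms by (cases p) auto

lemma lpnorm_infinity: "0 < k \<Longrightarrow> lpnorm \<infinity> k x = Max ((\<lambda>i. \<bar>x i\<bar>) ` {..<k})"
  unfolding lpnorm_def by (auto intro!: arg_cong[where f = Max])

lemma lpnorm_ereal: "lpnorm (ereal q) k x = (\<Sum>i<k. \<bar>x i\<bar> powr q) powr (1 / q)"
  unfolding lpnorm_def by simp

lemma lpnorm_nonneg: "0 \<le> lpnorm p k x"
proof (cases "p = \<infinity> \<and> 0 < k")
  case True
  then have "\<bar>x 0\<bar> \<le> lpnorm p k x"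
    by (auto simp: lpnorm_infinity intro!: Max_ge)
  then show ?thesis
    by linarith
qed (auto simp: lpnorm_def)

lemma lpnorm_zero: "lpnorm p k (\<lambda>i. 0) = 0"
proof (cases "p = \<infinity> \<and> 0 < k")
  case True
  then have "(\<lambda>i. \<bar>0::real\<bar>) ` {..<k} = {0}"
    by auto
  with True show ?thesis
    by (simp add: lpnorm_infinity)
qed (auto simp: lpnorm_def)

lemma abs_le_lpnorm:
  assumes "1 \<le> p" "i < k"
  shows "\<bar>x i\<bar> \<le> lpnorm p k x"
  using assms(1)
proof (cases rule: one_le_ereal_cases)
  case 1
  then show ?thesis
    using assms(2) by (auto simp: lpnorm_infinity intro!: Max_ge)
next
  case (2 q)
  have "\<bar>x i\<bar> powr q \<le> (\<Sum>i<k. \<bar>x i\<bar> powr q)"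
    using assms(2) by (intro member_le_sum) auto
  then have "(\<bar>x i\<bar> powr q) powr (1/q) \<le> (\<Sum>i<k. \<bar>x i\<bar> powr q) powr (1/q)"
    using 2 by (intro powr_mono2) auto
  then show ?thesis
    using 2 by (simp add: lpnorm_ereal powr_powr)
qed

lemma lpnorm_eq_0_imp:
  "1 \<le> p \<Longrightarrow> lpnorm p k x = 0 \<Longrightarrow> i < k \<Longrightarrow> x i = 0"
  using abs_le_lpnorm[of p i k x] by simp

lemma lpnorm_mono:
  assumes "1 \<le> p" and le: "\<And>i. i < k \<Longrightarrow> \<bar>x i\<bar> \<le> \<bar>y i\<bar>"
  shows "lpnorm p k x \<le> lpnorm p k y"
  using assms(1)
proof (cases rule: one_le_ereal_cases)
  case 1
  show ?thesis
  proof (cases "k = 0")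
    case False
    show ?thesis
      unfolding 1 lpnorm_infinity[OF False[unfolded neq0_conv]]
    proof (rule Max.boundedI)
      fix a assume "a \<in> (\<lambda>i. \<bar>x i\<bar>) ` {..<k}"
      then obtain i where "i < k" "a = \<bar>x i\<bar>" by auto
      then show "a \<le> Max ((\<lambda>i. \<bar>y i\<bar>) ` {..<k})"
        using le[of i] by (auto intro: order_trans[OF _ Max_ge])
    qed (use False in auto)
  qed (simp add: lpnorm_def)
next
  case (2 q)
  have "(\<Sum>i<k. \<bar>x i\<bar> powr q) \<le> (\<Sum>i<k. \<bar>y i\<bar> powr q)"
    using 2 le by (intro sum_mono powr_mono2) auto
  then show ?thesis
    using 2 by (auto simp: lpnorm_ereal intro!: powr_mono2 sum_nonneg)
qed

lemma lpnorm_scale: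
  assumes "1 \<le> p"
  shows "lpnorm p k (\<lambda>i. c * x i) = \<bar>c\<bar> * lpnorm p k x"
  using assms
proof (cases rule: one_le_ereal_cases)
  case 1
  show ?thesis
  proof (cases "k = 0")
    case False
    have "mono ((*) \<bar>c\<bar>)"
      by (simp add: monoI mult_left_mono)
    then have "\<bar>c\<bar> * Max ((\<lambda>i. \<bar>x i\<bar>) ` {..<k}) = Max ((\<lambda>i. \<bar>c\<bar> * \<bar>x i\<bar>) ` {..<k})"
      using False by (subst mono_Max_commute) (auto simp: image_image)
    then show ?thesis
      using False by (simp add: 1 lpnorm_infinity abs_mult)
  qed (simp add: lpnorm_def)
next
  case (2 q)
  have "(\<Sum>i<k. \<bar>c * x i\<bar> powr q) = \<bar>c\<bar> powr q * (\<Sum>i<k. \<bar>x i\<bar> powr q)"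
    by (simp add: abs_mult powr_mult sum_distrib_left)
  then show ?thesis
    using 2 by (simp add: lpnorm_ereal powr_mult sum_nonneg powr_powr)
qed

lemma convex_powr_nonneg:
  fixes u v t q :: real
  assumes "0 \<le> u" "0 \<le> v" "0 \<le> t" "t \<le> 1" "1 \<le> q"
  shows "(t * u + (1 - t) * v) powr q \<le> t * u powr q + (1 - t) * v powr q"
proof -
  have shrink: "(s * w) powr q \<le> s * w powr q" if "0 \<le> s" "s \<le> 1" "0 \<le> w" for s w :: real
  proof -
    have "s powr q \<le> s powr 1"
      using that assms(5) by (intro powr_mono') auto
    then show ?thesis
      using that by (simp add: powr_mult mult_right_mono)
  qed
  show ?thesis
  proof (cases "u = 0 \<or> v = 0")
    case True
    then show ?thesis
      using assms shrink[of t u] shrink[of "1 - t" v] by auto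
  next
    case False
    then show ?thesis
      using assms convex_onD[OF powr_convex[OF assms(5)], of "1 - t" u v] by simp
  qed
qed

lemma Minkowski_sum_powr:
  fixes x y :: "'a \<Rightarrow> real"
  assumes "finite I" "1 \<le> q"
  shows "(\<Sum>i\<in>I. \<bar>x i + y i\<bar> powr q) powr (1/q)
     \<le> (\<Sum>i\<in>I. \<bar>x i\<bar> powr q) powr (1/q) + (\<Sum>i\<in>I. \<bar>y i\<bar> powr q) powr (1/q)"
proof -
  define N where "N z = (\<Sum>i\<in>I. \<bar>z i\<bar> powr q) powr (1/q)" for z :: "'a \<Rightarrow> real"
  have N_powr: "N z powr q = (\<Sum>i\<in>I. \<bar>z i\<bar> powr q)" for z
    using assms(2) by (simp add: N_def powr_powr sum_nonneg)
  have N_nonneg: "0 \<le> N z" for z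
    by (simp add: N_def)
  have N_pos: "0 < N z" if "z j \<noteq> 0" "j \<in> I" for z j
  proof -
    have "0 < (\<Sum>i\<in>I. \<bar>z i\<bar> powr q)"
      using that assms by (intro sum_pos2[of I j]) auto
    then show ?thesis
      by (simp add: N_def)
  qed
  show "N (\<lambda>i. x i + y i) \<le> N x + N y"
  proof (cases "\<forall>i\<in>I. x i = 0")
    case True
    then have "N (\<lambda>i. x i + y i) = N y"
      unfolding N_def by (intro arg_cong[where f = "\<lambda>s. s powr (1/q)"] sum.cong) auto
    then show ?thesis
      using True by (simp add: N_def)
  next
    case x_nonzero: False
    show ?thesis
    proof (cases "\<forall>i\<in>I. y i = 0")
      case True
      then have "N (\<lambda>i. x i + y i) = N x"
        unfolding N_def by (intro arg_cong[where f = "\<lambda>s. s powr (1/q)"] sum.cong) auto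
      then show ?thesis
        using True by (simp add: N_def)
    next
      case False
      have a: "0 < N x" and b: "0 < N y"
        using x_nonzero False N_pos by blast+
      define t where "t = N x / (N x + N y)"
      have t: "0 \<le> t" "t \<le> 1" "1 - t = N y / (N x + N y)"
        using a b by (auto simp: t_def field_simps)
      \<comment> \<open>\<open>(x + y) / (N x + N y) = t (x / N x) + (1 - t) (y / N y)\<close> with unit vectors
        \<open>x / N x\<close>, \<open>y / N y\<close>; convexity of \<open>powr q\<close> does the rest.\<close>
      have "(\<bar>x i + y i\<bar> / (N x + N y)) powr q
          \<le> t * (\<bar>x i\<bar> powr q / N x powr q) + (1 - t) * (\<bar>y i\<bar> powr q / N y powr q)" for i
      proof -
        have "t * (\<bar>x i\<bar> / N x) + (1 - t) * (\<bar>y i\<bar> / N y) = (\<bar>x i\<bar> + \<bar>y i\<bar>) / (N x + N y)"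
          using a b unfolding t(3) by (simp add: t_def add_divide_distrib)
        then have "\<bar>x i + y i\<bar> / (N x + N y) \<le> t * (\<bar>x i\<bar> / N x) + (1 - t) * (\<bar>y i\<bar> / N y)"
          using a b by (simp add: divide_right_mono abs_triangle_ineq)
        then have "(\<bar>x i + y i\<bar> / (N x + N y)) powr q
            \<le> (t * (\<bar>x i\<bar> / N x) + (1 - t) * (\<bar>y i\<bar> / N y)) powr q"
          using assms(2) a b by (intro powr_mono2) auto
        also have "\<dots> \<le> t * (\<bar>x i\<bar> / N x) powr q + (1 - t) * (\<bar>y i\<bar> / N y) powr q"
          using a b t assms(2) by (intro convex_powr_nonneg) auto
        finally show ?thesis
          using a b by (simp add: powr_divide)
      qed
      then have "(\<Sum>i\<in>I. (\<bar>x i + y i\<bar> / (N x + N y)) powr q)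
          \<le> (\<Sum>i\<in>I. t * (\<bar>x i\<bar> powr q / N x powr q) + (1 - t) * (\<bar>y i\<bar> powr q / N y powr q))"
        by (rule sum_mono)
      also have "\<dots> = t * ((\<Sum>i\<in>I. \<bar>x i\<bar> powr q) / N x powr q)
          + (1 - t) * ((\<Sum>i\<in>I. \<bar>y i\<bar> powr q) / N y powr q)"
        by (simp add: sum.distrib sum_distrib_left sum_divide_distrib)
      also have "\<dots> = 1"
        using a b by (simp flip: N_powr)
      finally have "N (\<lambda>i. x i + y i) powr q \<le> (N x + N y) powr q"
        using a b by (simp add: N_powr powr_divide divide_le_eq flip: sum_divide_distrib)
      then have "(N (\<lambda>i. x i + y i) powr q) powr (1/q) \<le> ((N x + N y) powr q) powr (1/q)"
        using assms(2) by (auto intro: powr_mono2)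
      then show ?thesis
        using a b assms(2) N_nonneg[of "\<lambda>i. x i + y i"] by (simp add: powr_powr)
    qed
  qed
qed

lemma lpnorm_triangle:
  assumes "1 \<le> p"
  shows "lpnorm p k (\<lambda>i. x i + y i) \<le> lpnorm p k x + lpnorm p k y"
  using assms
proof (cases rule: one_le_ereal_cases)
  case 1
  show ?thesis
  proof (cases "k = 0")
    case False
    show ?thesis
      unfolding 1 lpnorm_infinity[OF False[unfolded neq0_conv]]
    proof (rule Max.boundedI)
      fix a assume "a \<in> (\<lambda>i. \<bar>x i + y i\<bar>) ` {..<k}"
      then obtain i where i: "i < k" "a = \<bar>x i + y i\<bar>"
        by auto
      have "\<bar>x i\<bar> \<le> Max ((\<lambda>i. \<bar>x i\<bar>) ` {..<k})" "\<bar>y i\<bar> \<le> Max ((\<lambda>i. \<bar>y i\<bar>) ` {..<k})"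
        using i by (auto intro!: Max_ge)
      then show "a \<le> Max ((\<lambda>i. \<bar>x i\<bar>) ` {..<k}) + Max ((\<lambda>i. \<bar>y i\<bar>) ` {..<k})"
        using i by linarith
    qed (use False in auto)
  qed (simp add: lpnorm_def)
next
  case (2 q)
  then show ?thesis
    using Minkowski_sum_powr[of "{..<k}" q x y] by (simp add: lpnorm_ereal)
qed

lemma lpnorm_sum:
  assumes "1 \<le> p" "finite J"
  shows "lpnorm p k (\<lambda>i. \<Sum>j\<in>J. f j i) \<le> (\<Sum>j\<in>J. lpnorm p k (f j))"
  using assms(2)
proof (induction J rule: finite_induct)
  case empty
  then show ?case
    by (simp add: lpnorm_zero)
next
  case (insert a J)
  then have "lpnorm p k (\<lambda>i. \<Sum>j\<in>insert a J. f j i) \<le> lpnorm p k (f a) + lpnorm p k (\<lambda>i. \<Sum>j\<in>J. f j i)"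
    using lpnorm_triangle[OF assms(1), of k "f a"] by simp
  with insert show ?case
    by simp
qed

section \<open>Matrices and the operator norm\<close>

lemma mv_cong: "(\<And>j. j < c \<Longrightarrow> u j = v j) \<Longrightarrow> mv c A u = mv c A v"
  unfolding mv_def by auto

lemma mv_diff: "mv c A (u - v) = mv c A u - mv c A v"
  unfolding mv_def by (auto simp: sum_subtractf algebra_simps)

lemma mv_add: "mv c A (\<lambda>j. u j + v j) = (\<lambda>i. mv c A u i + mv c A v i)"
  unfolding mv_def by (auto simp: sum.distrib algebra_simps)

lemma mv_sum: "mv c A (\<lambda>j. \<Sum>t\<in>T. u t j) = (\<lambda>i. \<Sum>t\<in>T. mv c A (u t) i)"
  unfolding mv_def by (auto simp: sum_distrib_left intro: sum.swap)

lemma mv_scale: "mv c A (\<lambda>j. t * v j) = (\<lambda>i. t * mv c A v i)"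
  unfolding mv_def by (auto simp: sum_distrib_left algebra_simps)

lemma mv_scale_rows: "mv c (\<lambda>i j. s i * A i j) v = (\<lambda>i. s i * mv c A v i)"
  unfolding mv_def by (auto simp: sum_distrib_left algebra_simps)

lemma mv_zero: "(\<And>j. j < c \<Longrightarrow> v j = 0) \<Longrightarrow> mv c A v = (\<lambda>i. 0)"
  unfolding mv_def by auto

lemma mv_mv: "mv k A (mv c B v) = mv c (mm k A B) v"
  unfolding mv_def mm_def
  by (auto simp: sum_distrib_left sum_distrib_right mult.assoc intro: sum.swap)

lemma mv_idm: "i < c \<Longrightarrow> mv c idm v i = v i"
  unfolding mv_def idm_def by (simp add: if_distrib[of "\<lambda>a. a * _"] cong: if_cong)

lemma bdd_above_opnorm_set:
  assumes "1 \<le> p"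
  shows "bdd_above {lpnorm p r (mv c A x) | x. lpnorm p c x \<le> 1}"
proof (rule bdd_aboveI)
  fix y assume "y \<in> {lpnorm p r (mv c A x) | x. lpnorm p c x \<le> 1}"
  then obtain x where y: "y = lpnorm p r (mv c A x)" and x: "lpnorm p c x \<le> 1"
    by auto
  have "\<bar>mv c A x i\<bar> \<le> \<bar>\<Sum>j<c. \<bar>A i j\<bar>\<bar>" for i
  proof -
    have "\<bar>mv c A x i\<bar> \<le> (\<Sum>j<c. \<bar>A i j\<bar> * \<bar>x j\<bar>)"
      unfolding mv_def by (rule order_trans[OF sum_abs]) (simp add: abs_mult)
    also have "\<dots> \<le> (\<Sum>j<c. \<bar>A i j\<bar>)"
      using abs_le_lpnorm[OF assms, of _ c x] x by (intro sum_mono mult_left_le) fastforce+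
    finally show ?thesis
      by simp
  qed
  then show "y \<le> lpnorm p r (\<lambda>i. \<Sum>j<c. \<bar>A i j\<bar>)"
    unfolding y using assms by (intro lpnorm_mono)
qed

lemma opnorm_nonneg:
  assumes "1 \<le> p"
  shows "0 \<le> opnorm p r c A"
proof -
  have "0 \<in> {lpnorm p r (mv c A x) | x. lpnorm p c x \<le> 1}"
    by (auto intro!: exI[of _ "\<lambda>i. 0"] simp: lpnorm_zero mv_zero)
  then show ?thesis
    unfolding opnorm_def by (rule cSup_upper2[OF _ order_refl bdd_above_opnorm_set[OF assms]])
qed

lemma lpnorm_mv_le_opnorm:
  assumes "1 \<le> p"
  shows "lpnorm p r (mv c A x) \<le> opnorm p r c A * lpnorm p c x"
proof (cases "lpnorm p c x = 0")
  case True
  then have "mv c A x = (\<lambda>i. 0)"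
    using lpnorm_eq_0_imp[OF assms] by (intro mv_zero)
  then show ?thesis
    using True by (simp add: lpnorm_zero)
next
  case False
  define N where "N = lpnorm p c x"
  have N: "0 < N"
    using False lpnorm_nonneg[of p c x] by (simp add: N_def)
  then have "lpnorm p c (\<lambda>j. (1 / N) * x j) = 1"
    using lpnorm_scale[OF assms, of c "1 / N" x] by (simp add: N_def)
  then have "lpnorm p r (mv c A (\<lambda>j. (1 / N) * x j)) \<le> opnorm p r c A"
    unfolding opnorm_def by (intro cSup_upper bdd_above_opnorm_set assms) auto
  then have "lpnorm p r (mv c A x) / N \<le> opnorm p r c A"
    using N lpnorm_scale[OF assms, of r "1 / N" "mv c A x"] unfolding mv_scale by simp
  then show ?thesis
    using N by (simp add: N_def divide_le_eq mult.commute)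
qed

section \<open>Unrolling the layer recursion\<close>

definition layer_residual ::
  "(nat \<Rightarrow> nat) \<Rightarrow> (nat \<Rightarrow> nat \<Rightarrow> nat \<Rightarrow> real) \<Rightarrow> (nat \<Rightarrow> nat \<Rightarrow> real)
     \<Rightarrow> (nat \<Rightarrow> nat \<Rightarrow> real) \<Rightarrow> nat \<Rightarrow> nat \<Rightarrow> real" where
  "layer_residual n W d v j = (\<lambda>i. v j i - d j i * mv (n (j - 1)) (W j) (v (j - 1)) i)"

lemma mv_prodDW_Suc:
  assumes "1 \<le> a" "a \<le> Suc k"
  shows "mv (n (a - 1)) (prodDW n W d a (Suc k)) w
    = (\<lambda>i. d (Suc k) i * mv (n k) (W (Suc k)) (mv (n (a - 1)) (prodDW n W d a k) w) i)"
proof (cases "a = Suc k")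
  case True
  have "prodDW n W d a k = idm"
    using True by (cases k) auto
  then have "mv (n k) (W (Suc k)) (mv (n (a - 1)) (prodDW n W d a k) w) = mv (n k) (W (Suc k)) w"
    using True by (auto intro: mv_cong simp: mv_idm)
  then show ?thesis
    using True by (simp add: mv_scale_rows)
next
  case False
  then show ?thesis
    using assms by (simp add: mv_mv [symmetric] mv_scale_rows)
qed

lemma prodDW_unroll:
  "i < n k \<Longrightarrow> v k i = mv (n 0) (prodDW n W d 1 k) (v 0) i
     + (\<Sum>j = 1..k. mv (n j) (prodDW n W d (j + 1) k) (layer_residual n W d v j) i)"
proof (induction k arbitrary: i)
  case 0
  then show ?case
    by (simp add: mv_idm)
next
  case (Suc k)
  let ?e = "layer_residual n W d v"
  have "mv (n k) (W (Suc k)) (v k)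
      = mv (n k) (W (Suc k)) (\<lambda>t. mv (n 0) (prodDW n W d 1 k) (v 0) t
          + (\<Sum>j = 1..k. mv (n j) (prodDW n W d (j + 1) k) (?e j) t))"
    using Suc.IH by (rule mv_cong)
  also have "\<dots> = (\<lambda>i. mv (n k) (W (Suc k)) (mv (n 0) (prodDW n W d 1 k) (v 0)) i
      + (\<Sum>j = 1..k. mv (n k) (W (Suc k)) (mv (n j) (prodDW n W d (j + 1) k) (?e j)) i))"
    by (simp add: mv_add mv_sum)
  finally have "d (Suc k) i * mv (n k) (W (Suc k)) (v k) i
      = d (Suc k) i * mv (n k) (W (Suc k)) (mv (n 0) (prodDW n W d 1 k) (v 0)) i
        + (\<Sum>j = 1..k. d (Suc k) i * mv (n k) (W (Suc k)) (mv (n j) (prodDW n W d (j + 1) k) (?e j)) i)"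
    by (simp add: distrib_left sum_distrib_left del: prodDW.simps)
  also have "\<dots> = mv (n 0) (prodDW n W d 1 (Suc k)) (v 0) i
        + (\<Sum>j = 1..k. mv (n j) (prodDW n W d (j + 1) (Suc k)) (?e j) i)"
    using mv_prodDW_Suc[of 1 k] mv_prodDW_Suc[of "_ + 1" k] by (auto intro!: sum.cong simp del: prodDW.simps)
  moreover have "?e (Suc k) i = mv (n (Suc k)) (prodDW n W d (Suc k + 1) (Suc k)) (?e (Suc k)) i"
    using Suc.prems by (simp add: mv_idm)
  ultimately show ?case
    by (simp add: layer_residual_def)
qed

lemma lpnorm_mv_unrolled_le:
  assumes "1 \<le> p"
  shows "lpnorm p r (mv (n k) M (v k))
    \<le> opnorm p r (n 0) (mm (n k) M (prodDW n W d 1 k)) * lpnorm p (n 0) (v 0)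
      + (\<Sum>j = 1..k. opnorm p r (n j) (mm (n k) M (prodDW n W d (j + 1) k))
                      * lpnorm p (n j) (layer_residual n W d v j))"
proof -
  let ?A = "\<lambda>j. mm (n k) M (prodDW n W d (j + 1) k)" and ?e = "layer_residual n W d v"
  have "mv (n k) M (v k) = mv (n k) M (\<lambda>t. mv (n 0) (prodDW n W d 1 k) (v 0) t
      + (\<Sum>j = 1..k. mv (n j) (prodDW n W d (j + 1) k) (?e j) t))"
    using prodDW_unroll by (rule mv_cong)
  also have "\<dots> = (\<lambda>i. mv (n 0) (?A 0) (v 0) i + (\<Sum>j = 1..k. mv (n j) (?A j) (?e j) i))"
    by (simp add: mv_add mv_sum mv_mv del: prodDW.simps)
  finally have "lpnorm p r (mv (n k) M (v k))
      \<le> lpnorm p r (mv (n 0) (?A 0) (v 0)) + lpnorm p r (\<lambda>i. \<Sum>j = 1..k. mv (n j) (?A j) (?e j) i)"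
    using lpnorm_triangle[OF assms] by simp
  also have "\<dots> \<le> lpnorm p r (mv (n 0) (?A 0) (v 0)) + (\<Sum>j = 1..k. lpnorm p r (mv (n j) (?A j) (?e j)))"
    by (intro add_left_mono lpnorm_sum[OF assms]) simp
  also have "\<dots> \<le> opnorm p r (n 0) (?A 0) * lpnorm p (n 0) (v 0)
      + (\<Sum>j = 1..k. opnorm p r (n j) (?A j) * lpnorm p (n j) (?e j))"
    by (intro add_mono sum_mono lpnorm_mv_le_opnorm assms)
  finally show ?thesis
    by simp
qed

lemma lipschitz_bound_propagation:
  assumes p: "1 \<le> p"
    and residual: "\<And>j i. j \<in> {1..L - 1} \<Longrightarrow> i < n j \<Longrightarrow>
      \<bar>layer_residual n W d v j i\<bar> \<le> \<bar>s j i * mv (n (j - 1)) (W j) (v (j - 1)) i\<bar>"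
    and m1: "m 1 = opnorm p (n 1) (n 0) (\<lambda>r c. s 1 r * W 1 r c)"
    and mrec: "\<And>l. l \<in> {2..L} \<Longrightarrow>
      m l = opnorm p (n l) (n 0) (mm (n (l - 1)) (\<lambda>r c. s l r * W l r c) (prodDW n W d 1 (l - 1)))
        + (\<Sum>j = 1..l - 1. opnorm p (n l) (n j)
            (mm (n (l - 1)) (\<lambda>r c. s l r * W l r c) (prodDW n W d (j + 1) (l - 1))) * m j)"
    and l: "l \<in> {1..L}"
  shows "lpnorm p (n l) (\<lambda>i. s l i * mv (n (l - 1)) (W l) (v (l - 1)) i)
    \<le> m l * lpnorm p (n 0) (v 0)"
  using l
proof (induction l rule: less_induct)
  case (less l)
  let ?sW = "\<lambda>r c. s l r * W l r c" and ?e = "layer_residual n W d v" and ?X = "lpnorm p (n 0) (v 0)"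
  have lhs: "(\<lambda>i. s l i * mv (n (l - 1)) (W l) (v (l - 1)) i) = mv (n (l - 1)) ?sW (v (l - 1))"
    by (simp add: mv_scale_rows)
  consider "l = 1" | "l \<in> {2..L}"
    using less.prems by force
  then show ?case
  proof cases
    case 1
    then show ?thesis
      unfolding lhs using lpnorm_mv_le_opnorm[OF p] m1 by simp
  next
    case 2
    have residual_le: "lpnorm p (n j) (?e j) \<le> m j * ?X" if "j \<in> {1..l - 1}" for j
    proof -
      have "lpnorm p (n j) (?e j) \<le> lpnorm p (n j) (\<lambda>i. s j i * mv (n (j - 1)) (W j) (v (j - 1)) i)"
        using that 2 by (intro lpnorm_mono[OF p] residual) auto
      also have "\<dots> \<le> m j * ?X"
        using that 2 by (intro less.IH) auto
      finally show ?thesis .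
    qed
    have "lpnorm p (n l) (mv (n (l - 1)) ?sW (v (l - 1)))
        \<le> opnorm p (n l) (n 0) (mm (n (l - 1)) ?sW (prodDW n W d 1 (l - 1))) * ?X
          + (\<Sum>j = 1..l - 1. opnorm p (n l) (n j) (mm (n (l - 1)) ?sW (prodDW n W d (j + 1) (l - 1)))
                              * lpnorm p (n j) (?e j))"
      by (rule lpnorm_mv_unrolled_le[OF p])
    also have "\<dots> \<le> opnorm p (n l) (n 0) (mm (n (l - 1)) ?sW (prodDW n W d 1 (l - 1))) * ?X
          + (\<Sum>j = 1..l - 1. opnorm p (n l) (n j) (mm (n (l - 1)) ?sW (prodDW n W d (j + 1) (l - 1)))
                              * (m j * ?X))"
      by (intro add_left_mono sum_mono mult_left_mono residual_le opnorm_nonneg p)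
    also have "\<dots> = m l * ?X"
      unfolding mrec[OF 2] distrib_right sum_distrib_right by (simp add: mult.assoc)
    finally show ?thesis
      unfolding lhs .
  qed
qed

section \<open>Slope-restricted layers\<close>

lemma slope_restricted_linearization_error:
  assumes "slope_restricted f a b" "c \<le> (a + b) / 2"
  shows "\<bar>f u - f v - c * (u - v)\<bar> \<le> (b - c) * \<bar>u - v\<bar>"
proof (cases "u = v")
  case False
  define k where "k = (f u - f v) / (u - v)"
  have "f u - f v = k * (u - v)"
    using False by (simp add: k_def)
  then have linearization: "f u - f v - c * (u - v) = (k - c) * (u - v)"
    by (simp add: left_diff_distrib)
  have "a \<le> k" "k \<le> b"
    using assms(1) False by (auto simp: slope_restricted_def k_def)
  then have "\<bar>k - c\<bar> \<le> b - c"
    using assms(2) by auto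
  then show ?thesis
    unfolding linearization by (simp add: abs_mult mult_right_mono)
qed simp

lemma act_eq_sig_preact: "0 < l \<Longrightarrow> act n W sig l x = (\<lambda>i. sig l i (preact n W sig l x i))"
  by (cases l) (simp_all add: preact_def)

lemma mv_act_diff:
  "mv (n (l - 1)) (W l) (act n W sig (l - 1) x - act n W sig (l - 1) x') i
    = preact n W sig l x i - preact n W sig l x' i"
  by (simp add: preact_def mv_diff)

lemma network_layer_residual_le:
  assumes "0 < j" "slope_restricted (sig j i) a b" "d j i \<le> (a + b) / 2"
  shows "\<bar>layer_residual n W d (\<lambda>k. act n W sig k x - act n W sig k x') j i\<bar>
    \<le> (b - d j i) * \<bar>preact n W sig j x i - preact n W sig j x' i\<bar>"
proof -
  let ?z = "preact n W sig j x i" and ?z' = "preact n W sig j x' i"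
  have "\<bar>layer_residual n W d (\<lambda>k. act n W sig k x - act n W sig k x') j i\<bar>
      = \<bar>sig j i ?z - sig j i ?z' - d j i * (?z - ?z')\<bar>"
    using assms(1) unfolding layer_residual_def mv_act_diff by (simp add: act_eq_sig_preact)
  also have "\<dots> \<le> (b - d j i) * \<bar>?z - ?z'\<bar>"
    using assms(2,3) by (rule slope_restricted_linearization_error)
  finally show ?thesis .
qed

theorem theorem2:
  fixes p :: ereal
    and L :: nat
    and n :: "nat \<Rightarrow> nat"
    and W :: "nat \<Rightarrow> nat \<Rightarrow> nat \<Rightarrow> real"
    and sig :: "nat \<Rightarrow> nat \<Rightarrow> real \<Rightarrow> real"
    and \<alpha> \<beta> d :: "nat \<Rightarrow> nat \<Rightarrow> real"
    and m :: "nat \<Rightarrow> real"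
  assumes p: "1 \<le> p"
    and L: "1 \<le> L"
    and slope: "\<And>l i. l \<in> {1..L-1} \<Longrightarrow> i < n l \<Longrightarrow> slope_restricted (sig l i) (\<alpha> l i) (\<beta> l i)"
    and alpha_nonneg: "\<And>l i. l \<in> {1..L-1} \<Longrightarrow> i < n l \<Longrightarrow> 0 \<le> \<alpha> l i"
    and alpha_le_beta: "\<And>l i. l \<in> {1..L-1} \<Longrightarrow> i < n l \<Longrightarrow> \<alpha> l i \<le> \<beta> l i"
    and d_nonneg: "\<And>l i. l \<in> {1..L-1} \<Longrightarrow> i < n l \<Longrightarrow> 0 \<le> d l i"
    and d_le: "\<And>l i. l \<in> {1..L-1} \<Longrightarrow> i < n l \<Longrightarrow> d l i \<le> (\<alpha> l i + \<beta> l i) / 2"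
    and m1: "m 1 = opnorm p (n 1) (n 0)
               (\<lambda>r c. (if 1 = L then 1 else \<beta> 1 r - d 1 r) * W 1 r c)"
    and mrec: "\<And>l. l \<in> {2..L} \<Longrightarrow>
       m l = opnorm p (n l) (n 0)
               (mm (n (l - 1)) (\<lambda>r c. (if l = L then 1 else \<beta> l r - d l r) * W l r c)
                   (prodDW n W d 1 (l - 1)))
           + (\<Sum>j = 1..l - 1. opnorm p (n l) (n j)
               (mm (n (l - 1)) (\<lambda>r c. (if l = L then 1 else \<beta> l r - d l r) * W l r c)
                   (prodDW n W d (j + 1) (l - 1))) * m j)"
  shows "\<forall>l \<in> {1..L}. \<forall>x x'.
           lpnorm p (n l)
             ((\<lambda>i. (if l = L then 1 else \<beta> l i - d l i) * preact n W sig l x i)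
              - (\<lambda>i. (if l = L then 1 else \<beta> l i - d l i) * preact n W sig l x' i))
           \<le> m l * lpnorm p (n 0) (x - x')"
proof (intro ballI allI)
  fix l x x'
  assume l: "l \<in> {1..L}"
  let ?v = "\<lambda>k. act n W sig k x - act n W sig k x'"
  let ?s = "\<lambda>l i. if l = L then 1 else \<beta> l i - d l i"
  have "\<bar>layer_residual n W d ?v j i\<bar> \<le> \<bar>?s j i * mv (n (j - 1)) (W j) (?v (j - 1)) i\<bar>"
    if j: "j \<in> {1..L - 1}" and i: "i < n j" for j i
  proof -
    have "\<bar>layer_residual n W d ?v j i\<bar>
        \<le> (\<beta> j i - d j i) * \<bar>preact n W sig j x i - preact n W sig j x' i\<bar>"
      using j
      by (intro network_layer_residual_le[where sig = sig and d = d, OF _ slope[OF j i] d_le[OF j i]])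
        auto
    also have "\<dots> = \<bar>?s j i * mv (n (j - 1)) (W j) (?v (j - 1)) i\<bar>"
      using j alpha_le_beta[OF j i] d_le[OF j i] unfolding mv_act_diff by (auto simp: abs_mult)
    finally show ?thesis .
  qed
  from lipschitz_bound_propagation[where s = ?s and v = ?v, OF p this m1 mrec l]
  show "lpnorm p (n l)
      ((\<lambda>i. (if l = L then 1 else \<beta> l i - d l i) * preact n W sig l x i)
        - (\<lambda>i. (if l = L then 1 else \<beta> l i - d l i) * preact n W sig l x' i))
      \<le> m l * lpnorm p (n 0) (x - x')"
    unfolding mv_act_diff by (simp add: fun_diff_def right_diff_distrib)
qed

end
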